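(* Let $S$ be an isolated invariant set for $f$ and let $P=(N,L)$ and $P'=(N',L')$ be filtration pairs for $S$. Then there exist an integer $M(P,P')\ge 0$ and maps $r^k_{P'P}:N_L\to N'_{L'}$, defined for all integers $k\ge M(P,P')$, such that (1) $M(P,P')=M(P',P)$ and (2) $r^k_{PP}=f_P^k$; and such that if $P''=(N'',L'')$ is another filtration pair for $S$ then (3) $M(P,P'')\le M(P,P')+M(P',P'')$ and (4) $r^{k_1+k_2}_{P''P}=r^{k_1}_{P''P'}\circ r^{k_2}_{P'P}$ whenever $k_1\ge M(P',P'')$ and $k_2\ge M(P,P')$.
   Context: Let $X$ be a locally compact metric space, $U\subset X$ open and $f:U\to X$ continuous. A solution through $x$ is a map $\sigma:\mathbb Z\to U$ with $\sigma(0)=x$ and $f(\sigma(n))=\sigma(n+1)$ for all $n$; for $N\subset U$, $\operatorname{Inv} N$ is the set of $x\in N$ admitting a solution through $x$ with all values in $N$. A compact $N\subset U$ is an isolating neighborhood if $\operatorname{Inv} N\subset\operatorname{Int} N$; $S$ is an isolated invariant set if $S=\operatorname{Inv} N$ for some isolating neighborhood $N$. The exit set of $N$ is $N^-=\{x\in N:f(x)\notin\operatorname{Int} N\}$. A filtration pair for an isolated invariant set $S$ is a pair of compact sets $L\subset N$ contained in the interior of the domain of $f$, each the closure of its interior, such that (1) $\operatorname{cl}(N\setminus L)$ is an isolating neighborhood with $\operatorname{Inv}\operatorname{cl}(N\setminus L)=S$; (2) $L$ is a neighborhood of $N^-$ in $N$; (3) $f(L)\cap\operatorname{cl}(N\setminus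 L)=\emptyset$. For a filtration pair $P=(N,L)$, $N_L=N/L$ with $L$ collapsed to the base point $[L]$ (if $L=\emptyset$, $N_L$ is $N$ with a disjoint point $[L]$ adjoined), $p:N\to N_L$ is the quotient map, and the pointed space map $f_P:N_L\to N_L$ is $f_P([L])=[L]$, $f_P(p(x))=p(f(x))$ for $x\in N\setminus L$. *)

theory Defs
  imports "HOL-Analysis.Analysis"
begin

text \<open>Setting: X is the ambient type 'a (a metric space, assumed locally compact in the
theorem), U an open subset, f continuous on U.  f is a total HOL function; only its
values on U matter.\<close>

definition Inv :: "'a set \<Rightarrow> ('a \<Rightarrow> 'a) \<Rightarrow> 'a set \<Rightarrow> 'a set" where
  "Inv U f N = {x \<in> N. \<exists>\<sigma>::int \<Rightarrow> 'a. \<sigma> 0 = x \<and>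
       (\<forall>n. \<sigma> n \<in> U \<and> \<sigma> n \<in> N \<and> f (\<sigma> n) = \<sigma> (n + 1))}"

definition isolating_nbhd :: "'a::topological_space set \<Rightarrow> ('a \<Rightarrow> 'a) \<Rightarrow> 'a set \<Rightarrow> bool" where
  "isolating_nbhd U f N \<longleftrightarrow> compact N \<and> N \<subseteq> U \<and> Inv U f N \<subseteq> interior N"

definition isolated_invariant_set :: "'a::topological_space set \<Rightarrow> ('a \<Rightarrow> 'a) \<Rightarrow> 'a set \<Rightarrow> bool" where
  "isolated_invariant_set U f S \<longleftrightarrow> (\<exists>N. isolating_nbhd U f N \<and> S = Inv U f N)"

definition exit_set :: "('a \<Rightarrow> 'a) \<Rightarrow> 'a::topological_space set \<Rightarrow> 'a set" where
  "exit_set f N = {x \<in> N. f x \<notin> interior N}"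

definition filtration_pair ::
  "'a::topological_space set \<Rightarrow> ('a \<Rightarrow> 'a) \<Rightarrow> 'a set \<Rightarrow> 'a set \<times> 'a set \<Rightarrow> bool" where
  "filtration_pair U f S P \<longleftrightarrow> (case P of (N, L) \<Rightarrow>
      compact N \<and> compact L \<and> L \<subseteq> N \<and> N \<subseteq> interior U \<and>
      closure (interior N) = N \<and> closure (interior L) = L \<and>
      isolating_nbhd U f (closure (N - L)) \<and> Inv U f (closure (N - L)) = S \<and>
      (\<exists>V. openin (top_of_set N) V \<and> exit_set f N \<subseteq> V \<and> V \<subseteq> L) \<and>
      f ` L \<inter> closure (N - L) = {})"

text \<open>A point of N \ L is represented by the singleton {x},
the base point [L] by the set L itself (if L = {} this is the extra point {}, which is
disjoint from all singletons, as required).  When L = {} the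
preimage of the base point is empty, so the base point is an isolated point, i.e.
N_L is N with a disjoint point adjoined.\<close>
definition qmap :: "'a set \<Rightarrow> 'a \<Rightarrow> 'a set" where
  "qmap L x = (if x \<in> L then L else {x})"

definition NL_space :: "'a set \<Rightarrow> 'a set \<Rightarrow> 'a set set" where
  "NL_space N L = insert L (qmap L ` N)"

definition NL_top :: "'a::topological_space set \<Rightarrow> 'a set \<Rightarrow> 'a set topology" where
  "NL_top N L = topology (\<lambda>V. V \<subseteq> NL_space N L \<and>
       openin (top_of_set N) {x \<in> N. qmap L x \<in> V})"

definition fP :: "('a \<Rightarrow> 'a) \<Rightarrow> 'a set \<Rightarrow> 'a set \<Rightarrow> 'a set" where
  "fP f L y = (if y = L then L else qmap L (f (the_elem y)))"

end

theory Submission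
  imports Defs
begin

(* Write D = N - L, A = cl (N - L) and W = int N - L for a filtration pair P = (N, L).
   Since Inv A_P = S lies in the open set W_Q, a compactness argument gives a time m such
   that every orbit segment of length 2m in A_P has its midpoint in W_Q; let mu(P, Q) be the
   least m that works in both directions.  Then an orbit staying in D_P (or D_Q) during a
   time interval stays in D_Q (or D_P) during the same interval shortened by mu at both ends.

   With M = 3 mu, the map r^k_{P'P} sends [x] to [f^k x] if the orbit of x lies in D_P up to
   time k - mu and in D_P' from time mu to k, and to the base point otherwise.  The set of
   such x is open in N, and the only further points of its closure are those with
   f^k x in L', which is why r^k is continuous.  Transferring orbit intervals as above,
   together with the triangle inequality for mu, gives r^k_{PP} = f_P^k and the
   composition law. *)

section \<open>Properties holding on intervals of times\<close>

lemma ball_atLeastAtMost_union: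
  fixes a b c d :: nat
  assumes "\<forall>i\<in>{a..b}. p i" and "\<forall>i\<in>{c..d}. p i" and "c \<le> Suc b"
  shows "\<forall>i\<in>{a..d}. p i"
proof
  fix i assume "i \<in> {a..d}"
  then show "p i" using assms by (cases "i \<le> b") auto
qed

definition segment_transfer :: "nat \<Rightarrow> (nat \<Rightarrow> bool) \<Rightarrow> (nat \<Rightarrow> bool) \<Rightarrow> bool" where
  "segment_transfer a p q \<longleftrightarrow> (\<forall>s e. (\<forall>i\<in>{s..e}. p i) \<longrightarrow> (\<forall>i\<in>{s + a..e - a}. q i))"

lemma segment_transferD:
  "segment_transfer a p q \<Longrightarrow> \<forall>i\<in>{s..e}. p i \<Longrightarrow> \<forall>i\<in>{s + a..e - a}. q i"
  unfolding segment_transfer_def by blast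

lemma ball_atLeastAtMost_shift:
  fixes a b c :: nat
  shows "(\<forall>i\<in>{a..b}. p (i + c)) \<longleftrightarrow> (\<forall>i\<in>{a + c..b + c}. p i)"
proof
  assume shifted: "\<forall>i\<in>{a..b}. p (i + c)"
  show "\<forall>i\<in>{a + c..b + c}. p i"
  proof
    fix i assume "i \<in> {a + c..b + c}"
    then have "i - c \<in> {a..b}" and "i - c + c = i"
      by auto
    then show "p i"
      using shifted by metis
  qed
qed auto

lemma segment_relay:
  fixes p q r :: "nat \<Rightarrow> bool" and \<alpha> \<beta> \<gamma> k1 k2 :: nat
  assumes \<gamma>: "\<gamma> \<le> \<alpha> + \<beta>" and k1: "3 * \<beta> \<le> k1" and k2: "3 * \<alpha> \<le> k2"
    and pq: "segment_transfer \<alpha> p q" and qp: "segment_transfer \<alpha> q p"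
    and qr: "segment_transfer \<beta> q r" and rq: "segment_transfer \<beta> r q"
    and pr: "segment_transfer \<gamma> p r" and rp: "segment_transfer \<gamma> r p"
  shows "(\<forall>i\<in>{0..k1 + k2 - \<gamma>}. p i) \<and> (\<forall>i\<in>{\<gamma>..k1 + k2}. r i) \<longleftrightarrow>
    (\<forall>i\<in>{0..k2 - \<alpha>}. p i) \<and> (\<forall>i\<in>{\<alpha>..k2}. q i) \<and>
    (\<forall>i\<in>{0..k1 - \<beta>}. q (i + k2)) \<and> (\<forall>i\<in>{\<beta>..k1}. r (i + k2))"
proof -
  have "(\<forall>i\<in>{0..k1 - \<beta>}. q (i + k2)) \<longleftrightarrow> (\<forall>i\<in>{k2..k1 + k2 - \<beta>}. q i)"
    and "(\<forall>i\<in>{\<beta>..k1}. r (i + k2)) \<longleftrightarrow> (\<forall>i\<in>{k2 + \<beta>..k1 + k2}. r i)"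
    unfolding ball_atLeastAtMost_shift using k1 by (simp_all add: add.commute)
  moreover have "(\<forall>i\<in>{0..k1 + k2 - \<gamma>}. p i) \<and> (\<forall>i\<in>{\<gamma>..k1 + k2}. r i) \<longleftrightarrow>
    (\<forall>i\<in>{0..k2 - \<alpha>}. p i) \<and> (\<forall>i\<in>{\<alpha>..k2}. q i) \<and>
    (\<forall>i\<in>{k2..k1 + k2 - \<beta>}. q i) \<and> (\<forall>i\<in>{k2 + \<beta>..k1 + k2}. r i)"
  proof
    assume "(\<forall>i\<in>{0..k1 + k2 - \<gamma>}. p i) \<and> (\<forall>i\<in>{\<gamma>..k1 + k2}. r i)"
    then have p: "\<forall>i\<in>{0..k1 + k2 - \<gamma>}. p i" and r: "\<forall>i\<in>{\<gamma>..k1 + k2}. r i" by auto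
    have "\<forall>i\<in>{\<alpha>..k1 + k2 - \<gamma> - \<alpha>}. q i"
      using segment_transferD[OF pq p, unfolded add_0] .
    moreover have "\<forall>i\<in>{\<gamma> + \<beta>..k1 + k2 - \<beta>}. q i"
      using segment_transferD[OF rq r] .
    ultimately have "\<forall>i\<in>{\<alpha>..k1 + k2 - \<beta>}. q i"
      by (rule ball_atLeastAtMost_union) (use \<gamma> k1 k2 in linarith)
    then show "(\<forall>i\<in>{0..k2 - \<alpha>}. p i) \<and> (\<forall>i\<in>{\<alpha>..k2}. q i) \<and>
      (\<forall>i\<in>{k2..k1 + k2 - \<beta>}. q i) \<and> (\<forall>i\<in>{k2 + \<beta>..k1 + k2}. r i)"
      using p r \<gamma> k1 k2 by auto
  next
    assume "(\<forall>i\<in>{0..k2 - \<alpha>}. p i) \<and> (\<forall>i\<in>{\<alpha>..k2}. q i) \<and>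
      (\<forall>i\<in>{k2..k1 + k2 - \<beta>}. q i) \<and> (\<forall>i\<in>{k2 + \<beta>..k1 + k2}. r i)"
    then have p: "\<forall>i\<in>{0..k2 - \<alpha>}. p i" and r: "\<forall>i\<in>{k2 + \<beta>..k1 + k2}. r i"
      and q: "\<forall>i\<in>{\<alpha>..k1 + k2 - \<beta>}. q i"
      using ball_atLeastAtMost_union[of \<alpha> k2 q k2 "k1 + k2 - \<beta>"] by auto
    have "\<forall>i\<in>{0..k1 + k2 - \<beta> - \<alpha>}. p i"
      using p segment_transferD[OF qp q]
      by (rule ball_atLeastAtMost_union) (use k2 in linarith)
    moreover have "\<forall>i\<in>{\<alpha> + \<beta>..k1 + k2}. r i"
      using segment_transferD[OF qr q] r
      by (rule ball_atLeastAtMost_union) (use k1 in linarith)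
    ultimately have p': "\<forall>i\<in>{0..k1 + k2 - \<beta> - \<alpha>}. p i" and r': "\<forall>i\<in>{\<alpha> + \<beta>..k1 + k2}. r i" .
    have "\<forall>i\<in>{0..k1 + k2 - \<gamma>}. p i"
      using p' segment_transferD[OF rp r']
      by (rule ball_atLeastAtMost_union) (use \<gamma> k1 k2 in linarith)
    moreover have "\<forall>i\<in>{\<gamma>..k1 + k2}. r i"
      using segment_transferD[OF pr p', unfolded add_0] r'
      by (rule ball_atLeastAtMost_union) (use \<gamma> k1 k2 in linarith)
    ultimately show "(\<forall>i\<in>{0..k1 + k2 - \<gamma>}. p i) \<and> (\<forall>i\<in>{\<gamma>..k1 + k2}. r i)" ..
  qed
  ultimately show ?thesis
    by simp
qed

section \<open>The pointed quotient space\<close>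

lemma istopology_NL_top:
  "istopology (\<lambda>V. V \<subseteq> NL_space N L \<and> openin (top_of_set N) {x \<in> N. qmap L x \<in> V})"
  unfolding istopology_def
proof (rule conjI; intro allI impI)
  fix V W
  assume "V \<subseteq> NL_space N L \<and> openin (top_of_set N) {x \<in> N. qmap L x \<in> V}"
    and "W \<subseteq> NL_space N L \<and> openin (top_of_set N) {x \<in> N. qmap L x \<in> W}"
  moreover have "{x \<in> N. qmap L x \<in> V \<inter> W} = {x \<in> N. qmap L x \<in> V} \<inter> {x \<in> N. qmap L x \<in> W}"
    by auto
  ultimately show "V \<inter> W \<subseteq> NL_space N L \<and> openin (top_of_set N) {x \<in> N. qmap L x \<in> V \<inter> W}"
    by (auto intro: openin_Int)
next
  fix \<V>
  assume "\<forall>V\<in>\<V>. V \<subseteq> NL_space N L \<and> openin (top_of_set N) {x \<in> N. qmap L x \<in> V}"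
  moreover have "{x \<in> N. qmap L x \<in> \<Union>\<V>} = (\<Union>V\<in>\<V>. {x \<in> N. qmap L x \<in> V})"
    by auto
  ultimately show "\<Union>\<V> \<subseteq> NL_space N L \<and> openin (top_of_set N) {x \<in> N. qmap L x \<in> \<Union>\<V>}"
    by (auto intro: openin_Union)
qed

lemma openin_NL_top:
  "openin (NL_top N L) V \<longleftrightarrow> V \<subseteq> NL_space N L \<and> openin (top_of_set N) {x \<in> N. qmap L x \<in> V}"
  unfolding NL_top_def topology_inverse'[OF istopology_NL_top] ..

lemma qmap_in_NL_space: "x \<in> N \<Longrightarrow> qmap L x \<in> NL_space N L"
  unfolding NL_space_def by (rule insertI2, rule imageI)

lemma topspace_NL_top: "topspace (NL_top N L) = NL_space N L"
proof -
  have "{x \<in> N. qmap L x \<in> NL_space N L} = N"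
    using qmap_in_NL_space by auto
  then have "openin (NL_top N L) (NL_space N L)"
    unfolding openin_NL_top by simp
  then show ?thesis
    unfolding topspace_def openin_NL_top by auto
qed

lemma NL_space_cases:
  assumes "y \<in> NL_space N L"
  obtains "y = L" | x where "x \<in> N - L" and "y = {x}"
  using assms unfolding NL_space_def qmap_def by auto

lemma continuous_map_NL_top_glue:
  assumes E: "openin (top_of_set N) E" "E \<subseteq> F" "E \<inter> L = {}"
    and F: "closedin (top_of_set N) F"
    and g: "continuous_on F g" "g ` E \<subseteq> N' - L'" "g ` (F - E) \<subseteq> L'"
    and L': "L' \<subseteq> N'"
  shows "continuous_map (NL_top N L) (NL_top N' L')
    (\<lambda>y. if y \<noteq> L \<and> the_elem y \<in> E then {g (the_elem y)} else L')"
    (is "continuous_map _ _ ?h")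
proof -
  have h_qmap: "?h (qmap L x) = (if x \<in> E then {g x} else L')" for x
    using E(3) by (auto simp: qmap_def)
  have g_qmap: "qmap L' (g x) = {g x}" if "x \<in> E" for x
    using g(2) that by (auto simp: qmap_def)
  have range: "?h y \<in> NL_space N' L'" if "y \<in> NL_space N L" for y
  proof -
    from that consider "y = L" | x where "x \<in> N" "y = qmap L x"
      unfolding NL_space_def by blast
    then show ?thesis
    proof cases
      case (2 x)
      show ?thesis
      proof (cases "x \<in> E")
        case True
        then have "g x \<in> N'"
          using g(2) by blast
        then show ?thesis
          using 2 True h_qmap g_qmap qmap_in_NL_space by metis
      next
        case False
        then have "?h y = L'"
          unfolding 2 h_qmap by simp
        then show ?thesis
          by (simp add: NL_space_def)
      qed
    qed (simp add: NL_space_def)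
  qed
  have preimage_open: "openin (top_of_set N) {x \<in> N. ?h (qmap L x) \<in> V}"
    if V: "openin (NL_top N' L') V" for V
  proof -
    define W where "W = {z \<in> N'. qmap L' z \<in> V}"
    have W: "openin (top_of_set N') W"
      using V unfolding W_def openin_NL_top by blast
    have E_V: "{g x} \<in> V \<longleftrightarrow> g x \<in> W" if "x \<in> E" for x
      using g(2) that g_qmap[OF that] unfolding W_def by auto
    have EN: "E \<subseteq> N"
      using E(1) by (rule openin_imp_subset)
    show ?thesis
    proof (cases "L' \<in> V")
      case False
      have "{x \<in> N. ?h (qmap L x) \<in> V} = E \<inter> g -` W"
        using False EN E_V h_qmap by auto
      moreover have "openin (top_of_set E) (E \<inter> g -` W)"
        using g(1,2) E(2) W by (intro continuous_openin_preimage[where T = N'])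
          (auto intro: continuous_on_subset)
      ultimately show ?thesis
        using E(1) by (auto intro: openin_trans)
    next
      case True
      then have "L' \<subseteq> W"
        using L' unfolding W_def by (auto simp: qmap_def)
      then have "{x \<in> N. ?h (qmap L x) \<in> V} = N - (F \<inter> g -` (N' - W))"
        using EN E(2) g(2,3) E_V h_qmap True by auto
      moreover have "closedin (top_of_set N) (F \<inter> g -` (N' - W))"
      proof (rule closedin_trans[OF _ F])
        show "closedin (top_of_set F) (F \<inter> g -` (N' - W))"
          using g L' W by (intro continuous_closedin_preimage_gen[where T = N']) auto
      qed
      ultimately show ?thesis
        by (simp add: openin_diff)
    qed
  qed
  have "{x \<in> N. qmap L x \<in> {y \<in> NL_space N L. ?h y \<in> V}} = {x \<in> N. ?h (qmap L x) \<in> V}" for V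
    by (intro Collect_cong conj_cong refl) (simp add: qmap_in_NL_space)
  then show ?thesis
    unfolding continuous_map_def topspace_NL_top
    using range preimage_open by (auto simp: openin_NL_top)
qed

section \<open>Orbit segments in compact sets\<close>

lemma compact_decseq_Inter_nonempty:
  fixes F :: "nat \<Rightarrow> 'a::t2_space set"
  assumes "\<And>n. compact (F n)" and "\<And>n. F n \<noteq> {}" and "decseq F"
  shows "(\<Inter>n. F n) \<noteq> {}"
proof (rule compact_space_imp_nest)
  show "compact_space (top_of_set (F 0))"
    using assms(1) by (simp add: compact_space_subtopology)
  show "closedin (top_of_set (F 0)) (F n)" for n
    using assms(1,3) by (intro closed_subset) (auto simp: compact_imp_closed decseq_def)
qed (use assms in auto)

lemma funpow_apply_add: "(g ^^ m) ((g ^^ n) x) = (g ^^ (m + n)) x"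
  by (simp add: funpow_add)

lemma funpow_shift_segment:
  assumes "\<forall>i\<le>n + k. (g ^^ i) x \<in> A"
  shows "\<forall>i\<le>n. (g ^^ i) ((g ^^ k) x) \<in> A"
proof (intro allI impI)
  fix i assume "i \<le> n"
  then have "(g ^^ (i + k)) x \<in> A"
    using assms by simp
  then show "(g ^^ i) ((g ^^ k) x) \<in> A"
    by (simp add: funpow_add)
qed

lemma orbit_constraint_Suc:
  "{x. \<forall>i\<le>Suc n. (f ^^ i) x \<in> C i} = C 0 \<inter> f -` {x. \<forall>i\<le>n. (f ^^ i) x \<in> C (Suc i)}"
  by (auto simp only: less_Suc_eq_le[symmetric] All_less_Suc2 funpow_Suc_right o_apply
      funpow_0 id_apply vimage_Collect_eq Int_Collect)

lemma invariant_subset_Inv: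
  fixes f :: "'a \<Rightarrow> 'a"
  assumes TA: "T \<subseteq> A \<inter> U" and fT: "f ` T \<subseteq> T" and onto: "T \<subseteq> f ` T"
  shows "T \<subseteq> Inv U f A"
proof
  fix z assume z: "z \<in> T"
  have "\<forall>w\<in>T. \<exists>y. y \<in> T \<and> f y = w"
    using onto by blast
  then obtain pre where pre: "\<And>w. w \<in> T \<Longrightarrow> pre w \<in> T \<and> f (pre w) = w"
    by metis
  define \<sigma> where "\<sigma> n = (if 0 \<le> n then (f ^^ nat n) z else (pre ^^ nat (- n)) z)" for n :: int
  have f_orbit: "(f ^^ n) z \<in> T" and pre_orbit: "(pre ^^ n) z \<in> T" for n
    by (induction n) (use z fT pre in auto)
  have \<sigma>_T: "\<sigma> n \<in> T" for n
    unfolding \<sigma>_def using f_orbit pre_orbit by simp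
  have \<sigma>_step: "f (\<sigma> n) = \<sigma> (n + 1)" for n
  proof (cases "0 \<le> n")
    case True
    then have "nat (n + 1) = Suc (nat n)"
      by simp
    then show ?thesis
      using True unfolding \<sigma>_def by simp
  next
    case False
    then have "nat (- n) = Suc (nat (- (n + 1)))" and "\<sigma> (n + 1) = (pre ^^ nat (- (n + 1))) z"
      unfolding \<sigma>_def by auto
    then show ?thesis
      using False pre[OF pre_orbit] unfolding \<sigma>_def by simp
  qed
  moreover have "\<sigma> 0 = z"
    by (simp add: \<sigma>_def)
  ultimately show "z \<in> Inv U f A"
    unfolding Inv_def using \<sigma>_T TA z by blast
qed

locale dynamical_system =
  fixes U :: "'a::metric_space set" and f :: "'a \<Rightarrow> 'a"
  assumes open_domain: "open U" and continuous_f: "continuous_on U f"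
begin

lemma continuous_on_funpow:
  assumes "\<And>x i. x \<in> H \<Longrightarrow> i < m \<Longrightarrow> (f ^^ i) x \<in> U"
  shows "continuous_on H (f ^^ m)"
  using assms
proof (induction m)
  case (Suc m)
  have "continuous_on ((f ^^ m) ` H) f"
    using continuous_f by (rule continuous_on_subset) (use Suc.prems in auto)
  then have "continuous_on H (f \<circ> f ^^ m)"
    using Suc by (intro continuous_on_compose) auto
  then show ?case
    by simp
qed (simp add: continuous_on_id)

lemma closed_orbit_constraint:
  assumes "\<And>i. i \<le> n \<Longrightarrow> closed (C i) \<and> C i \<subseteq> U"
  shows "closed {x. \<forall>i\<le>n. (f ^^ i) x \<in> C i}"
  using assms
proof (induction n arbitrary: C)
  case (Suc n)
  have "continuous_on (C 0) f"
    using continuous_f by (rule continuous_on_subset) (use Suc.prems in blast)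
  then show ?case
    unfolding orbit_constraint_Suc using Suc
    by (intro continuous_closed_preimage) auto
qed simp

lemma open_orbit_constraint:
  assumes "\<And>i. i \<le> n \<Longrightarrow> open (G i)"
  shows "open {x. \<forall>i\<le>n. (f ^^ i) x \<in> U \<inter> G i}"
  using assms
proof (induction n arbitrary: G)
  case 0
  have "{x. \<forall>i\<le>0. (f ^^ i) x \<in> U \<inter> G i} = U \<inter> G 0"
    by auto
  then show ?case
    using 0 open_domain by (simp add: open_Int)
next
  case (Suc n)
  have "continuous_on (U \<inter> G 0) f"
    using continuous_f by (rule continuous_on_subset) blast
  then show ?case
    unfolding orbit_constraint_Suc using Suc open_domain
    by (intro continuous_open_preimage) auto
qed

lemma image_Inter_compact_nest:
  assumes compact: "\<And>m. compact (E m)" and EU: "\<And>m. E m \<subseteq> U" and dec: "decseq E"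
    and into: "\<And>m. f ` E (Suc m) \<subseteq> E m" and onto: "\<And>m. E (Suc m) \<subseteq> f ` E m"
  shows "f ` (\<Inter>m. E m) = (\<Inter>m. E m)"
proof
  show "f ` (\<Inter>m. E m) \<subseteq> (\<Inter>m. E m)"
    using into by blast
  show "(\<Inter>m. E m) \<subseteq> f ` (\<Inter>m. E m)"
  proof
    fix w assume w: "w \<in> (\<Inter>m. E m)"
    have "compact (E m \<inter> f -` {w})" for m
    proof -
      have "continuous_on (E m) f"
        using continuous_f EU by (rule continuous_on_subset)
      then have "closedin (top_of_set (E m)) (E m \<inter> f -` {w})"
        by (rule continuous_closedin_preimage) simp
      then show ?thesis
        by (rule closedin_compact[OF compact])
    qed
    moreover have "E m \<inter> f -` {w} \<noteq> {}" for m
      using w onto[of m] by blast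
    moreover have "decseq (\<lambda>m. E m \<inter> f -` {w})"
      using dec by (auto simp: decseq_def)
    ultimately have "(\<Inter>m. E m \<inter> f -` {w}) \<noteq> {}"
      by (rule compact_decseq_Inter_nonempty)
    then show "w \<in> f ` (\<Inter>m. E m)"
      by blast
  qed
qed

lemma long_segment_centre_in_open:
  assumes compact: "compact A" and AU: "A \<subseteq> U" and W: "open W" "Inv U f A \<subseteq> W"
  shows "\<exists>m. \<forall>x. (\<forall>i\<le>2 * m. (f ^^ i) x \<in> A) \<longrightarrow> (f ^^ m) x \<in> W"
proof (rule ccontr)
  assume escape: "\<nexists>m. \<forall>x. (\<forall>i\<le>2 * m. (f ^^ i) x \<in> A) \<longrightarrow> (f ^^ m) x \<in> W"
  define E where "E m = (f ^^ m) ` {x. \<forall>i\<le>2 * m. (f ^^ i) x \<in> A}" for m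
  have E_A: "E m \<subseteq> A" for m
    unfolding E_def by force
  have E_compact: "compact (E m)" for m
  proof -
    define H where "H = {x. \<forall>i\<le>2 * m. (f ^^ i) x \<in> A}"
    have "closed H"
      unfolding H_def using compact AU
      by (intro closed_orbit_constraint) (auto intro: compact_imp_closed)
    then have "compact (A \<inter> H)"
      by (rule compact_Int_closed[OF compact])
    moreover have "A \<inter> H = H"
      unfolding H_def by force
    ultimately have "compact H"
      by simp
    moreover have "continuous_on H (f ^^ m)"
      unfolding H_def using AU by (intro continuous_on_funpow) auto
    ultimately show ?thesis
      unfolding E_def H_def[symmetric] by (rule compact_continuous_image[rotated])
  qed
  have E_mem: "(f ^^ m) x \<in> E m" if "\<forall>i\<le>2 * m. (f ^^ i) x \<in> A" for m x
    unfolding E_def using that by blast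
  have E_Suc: "y \<in> E m \<and> f y \<in> E m \<and> y \<in> f ` E m" if "y \<in> E (Suc m)" for y m
  proof -
    obtain x where x: "\<forall>i\<le>2 * m + 2. (f ^^ i) x \<in> A" and y: "y = (f ^^ Suc m) x"
      using \<open>y \<in> E (Suc m)\<close> unfolding E_def by auto
    have shifted: "(f ^^ m) ((f ^^ k) x) \<in> E m" if "k \<le> 2" for k
      by (rule E_mem, rule funpow_shift_segment) (use x that in auto)
    show ?thesis
    proof (intro conjI)
      have "y = (f ^^ m) ((f ^^ 1) x)"
        unfolding y by (simp add: funpow_swap1)
      then show "y \<in> E m"
        using shifted[of 1] by simp
      have "f y = (f ^^ m) ((f ^^ 2) x)"
        unfolding y by (simp add: funpow_swap1 numeral_2_eq_2)
      then show "f y \<in> E m"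
        using shifted[of 2] by simp
      show "y \<in> f ` E m"
        unfolding y using shifted[of 0] by simp
    qed
  qed
  have E_dec: "decseq E"
    using E_Suc by (intro decseq_SucI subsetI) blast
  have "(\<Inter>m. E m - W) \<noteq> {}"
  proof (rule compact_decseq_Inter_nonempty)
    show "compact (E m - W)" for m
      using E_compact W(1) by (rule compact_diff)
    show "E m - W \<noteq> {}" for m
    proof -
      obtain x where "\<forall>i\<le>2 * m. (f ^^ i) x \<in> A" "(f ^^ m) x \<notin> W"
        using escape by blast
      then show ?thesis
        using E_mem by blast
    qed
    show "decseq (\<lambda>m. E m - W)"
      using E_dec by (auto simp: decseq_def)
  qed
  then obtain z where z: "z \<in> (\<Inter>m. E m)" "z \<notin> W"
    by blast
  have TA: "(\<Inter>m. E m) \<subseteq> A \<inter> U"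
    using E_A[of 0] AU by blast
  have "f ` (\<Inter>m. E m) = (\<Inter>m. E m)"
  proof (rule image_Inter_compact_nest[OF E_compact _ E_dec])
    show "E m \<subseteq> U" for m
      using E_A AU by blast
    show "f ` E (Suc m) \<subseteq> E m" and "E (Suc m) \<subseteq> f ` E m" for m
      using E_Suc by auto
  qed
  then have "(\<Inter>m. E m) \<subseteq> Inv U f A"
    by (intro invariant_subset_Inv[OF TA]) simp_all
  then show False
    using z W(2) by blast
qed

end

section \<open>Filtration pairs\<close>

definition free_part :: "'a set \<times> 'a set \<Rightarrow> 'a set" where
  "free_part P = fst P - snd P"

definition free_closure :: "'a::topological_space set \<times> 'a set \<Rightarrow> 'a set" where
  "free_closure P = closure (fst P - snd P)"

definition free_interior :: "'a::topological_space set \<times> 'a set \<Rightarrow> 'a set" where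
  "free_interior P = interior (fst P) - snd P"

lemma free_part_subset_closure: "free_part P \<subseteq> free_closure P"
  unfolding free_part_def free_closure_def by (rule closure_subset)

lemma free_interior_subset_free_part: "free_interior P \<subseteq> free_part P"
  unfolding free_interior_def free_part_def using interior_subset by blast

lemma free_interior_subset_closure: "free_interior P \<subseteq> free_closure P"
  using free_interior_subset_free_part free_part_subset_closure by blast

context
  fixes U :: "'a::t2_space set" and f S P
  assumes fp: "filtration_pair U f S P"
begin

lemma filtration_pairD:
  "compact (fst P)" "compact (snd P)" "snd P \<subseteq> fst P" "fst P \<subseteq> U"
  "isolating_nbhd U f (free_closure P)" "Inv U f (free_closure P) = S"
  "exit_set f (fst P) \<subseteq> snd P" "f ` snd P \<inter> free_closure P = {}"
proof -
  obtain N L where P: "P = (N, L)"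
    by fastforce
  show "compact (fst P)" "compact (snd P)" "snd P \<subseteq> fst P" "fst P \<subseteq> U"
    "isolating_nbhd U f (free_closure P)" "Inv U f (free_closure P) = S"
    "exit_set f (fst P) \<subseteq> snd P" "f ` snd P \<inter> free_closure P = {}"
    using fp interior_subset[of U] unfolding P filtration_pair_def free_closure_def by auto
qed

lemma filtration_pair_closed: "closed (fst P)" "closed (snd P)"
  using filtration_pairD(1,2) by (simp_all add: compact_imp_closed)

lemma filtration_pair_subset: "snd P \<subseteq> fst P" "fst P \<subseteq> U"
  using filtration_pairD(3,4) .

lemma filtration_pair_free_closure:
  "compact (free_closure P)" "free_closure P \<subseteq> U" "Inv U f (free_closure P) = S"
  "S \<subseteq> interior (free_closure P)"
  using filtration_pairD(5,6) unfolding isolating_nbhd_def by auto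

lemma free_closure_subset: "free_closure P \<subseteq> fst P"
  unfolding free_closure_def using filtration_pair_closed by (simp add: closure_minimal)

lemma open_free_interior: "open (free_interior P)"
  unfolding free_interior_def using filtration_pair_closed by (simp add: open_Diff)

lemma filtration_pair_image_free_part: "x \<in> free_part P \<Longrightarrow> f x \<in> interior (fst P)"
  using filtration_pairD(7) unfolding exit_set_def free_part_def by blast

lemma filtration_pair_image_exit: "x \<in> snd P \<Longrightarrow> f x \<notin> free_closure P"
  using filtration_pairD(8) by blast

lemma filtration_pair_invariant_subset: "S \<subseteq> free_interior P"
proof
  fix s assume s: "s \<in> S"
  then have "s \<in> interior (fst P)"
    using filtration_pair_free_closure(4) interior_mono[OF free_closure_subset] by blast
  moreover have "s \<notin> snd P"
  proof
    assume "s \<in> snd P"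
    obtain \<sigma> :: "int \<Rightarrow> 'a" where "\<sigma> 0 = s" "\<sigma> 1 \<in> free_closure P" "f (\<sigma> 0) = \<sigma> 1"
      using s filtration_pair_free_closure(3) unfolding Inv_def by fastforce
    then show False
      using filtration_pair_image_exit[OF \<open>s \<in> snd P\<close>] by simp
  qed
  ultimately show "s \<in> free_interior P"
    unfolding free_interior_def by blast
qed

end

context dynamical_system
begin

definition isolation_time :: "'a set \<times> 'a set \<Rightarrow> 'a set \<times> 'a set \<Rightarrow> nat \<Rightarrow> bool" where
  "isolation_time P Q m \<longleftrightarrow>
     (\<forall>x. (\<forall>i\<le>2 * m. (f ^^ i) x \<in> free_closure P) \<longrightarrow> (f ^^ m) x \<in> free_interior Q)"

definition isolation_bound :: "'a set \<times> 'a set \<Rightarrow> 'a set \<times> 'a set \<Rightarrow> nat" where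
  "isolation_bound P Q = (LEAST m. isolation_time P Q m \<and> isolation_time Q P m)"

lemma isolation_time_centre:
  assumes "isolation_time P Q a" and "a \<le> t"
    and "\<forall>i\<in>{t - a..t + a}. (f ^^ i) x \<in> free_closure P"
  shows "(f ^^ t) x \<in> free_interior Q"
proof -
  have "\<forall>j\<le>2 * a. (f ^^ j) ((f ^^ (t - a)) x) \<in> free_closure P"
  proof (intro allI impI)
    fix j assume "j \<le> 2 * a"
    then have "j + (t - a) \<in> {t - a..t + a}"
      using assms(2) by auto
    then show "(f ^^ j) ((f ^^ (t - a)) x) \<in> free_closure P"
      unfolding funpow_apply_add using assms(3) by blast
  qed
  then have "(f ^^ a) ((f ^^ (t - a)) x) \<in> free_interior Q"
    using assms(1) unfolding isolation_time_def by blast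
  then show ?thesis
    using assms(2) by (simp add: funpow_apply_add)
qed

lemma isolation_time_mono:
  assumes "isolation_time P Q m" and "m \<le> m'"
  shows "isolation_time P Q m'"
  unfolding isolation_time_def
proof (intro allI impI)
  fix x assume "\<forall>i\<le>2 * m'. (f ^^ i) x \<in> free_closure P"
  then show "(f ^^ m') x \<in> free_interior Q"
    using assms by (intro isolation_time_centre[OF assms(1)]) auto
qed

lemma isolation_time_exists:
  assumes "filtration_pair U f S P" and "filtration_pair U f S Q"
  shows "\<exists>m. isolation_time P Q m"
  unfolding isolation_time_def
  using filtration_pair_free_closure[OF assms(1)]
    open_free_interior[OF assms(2)] filtration_pair_invariant_subset[OF assms(2)]
  by (intro long_segment_centre_in_open) auto

lemma isolation_time_trans:
  assumes "isolation_time P Q a" and "isolation_time Q R b"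
  shows "isolation_time P R (a + b)"
  unfolding isolation_time_def
proof (intro allI impI)
  fix x assume x: "\<forall>i\<le>2 * (a + b). (f ^^ i) x \<in> free_closure P"
  have "(f ^^ i) x \<in> free_closure Q" if "i \<in> {a..a + 2 * b}" for i
  proof -
    have "(f ^^ i) x \<in> free_interior Q"
      using x that by (intro isolation_time_centre[OF assms(1)]) auto
    then show ?thesis
      using free_interior_subset_closure by blast
  qed
  then show "(f ^^ (a + b)) x \<in> free_interior R"
    by (intro isolation_time_centre[OF assms(2)]) auto
qed

lemma isolation_bound:
  assumes "filtration_pair U f S P" and "filtration_pair U f S Q"
  shows "isolation_time P Q (isolation_bound P Q)" and "isolation_time Q P (isolation_bound P Q)"
proof -
  obtain a b where "isolation_time P Q a" and "isolation_time Q P b"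
    using isolation_time_exists assms by metis
  then have "isolation_time P Q (max a b) \<and> isolation_time Q P (max a b)"
    by (auto intro: isolation_time_mono)
  then have "isolation_time P Q (isolation_bound P Q) \<and> isolation_time Q P (isolation_bound P Q)"
    unfolding isolation_bound_def by (rule LeastI)
  then show "isolation_time P Q (isolation_bound P Q)" and "isolation_time Q P (isolation_bound P Q)"
    by blast+
qed

lemma isolation_bound_sym: "isolation_bound P Q = isolation_bound Q P"
  unfolding isolation_bound_def by (simp add: conj_commute)

lemma isolation_bound_triangle:
  assumes "filtration_pair U f S P" and "filtration_pair U f S Q" and "filtration_pair U f S R"
  shows "isolation_bound P R \<le> isolation_bound P Q + isolation_bound Q R"
  unfolding isolation_bound_def[of P R]
proof (rule Least_le, rule conjI)
  show "isolation_time P R (isolation_bound P Q + isolation_bound Q R)"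
    using isolation_bound(1)[OF assms(1,2)] isolation_bound(1)[OF assms(2,3)]
    by (rule isolation_time_trans)
  show "isolation_time R P (isolation_bound P Q + isolation_bound Q R)"
    using isolation_bound(2)[OF assms(2,3)] isolation_bound(2)[OF assms(1,2)]
    by (subst add.commute) (rule isolation_time_trans)
qed

lemma segment_transfer_orbit:
  assumes "isolation_time P Q a"
  shows "segment_transfer a (\<lambda>i. (f ^^ i) x \<in> free_part P) (\<lambda>i. (f ^^ i) x \<in> free_part Q)"
  unfolding segment_transfer_def
proof (intro allI impI ballI)
  fix s e t
  assume "\<forall>i\<in>{s..e}. (f ^^ i) x \<in> free_part P" and t: "t \<in> {s + a..e - a}"
  then have "\<forall>i\<in>{t - a..t + a}. (f ^^ i) x \<in> free_closure P"
    using free_part_subset_closure by fastforce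
  then have "(f ^^ t) x \<in> free_interior Q"
    using t by (intro isolation_time_centre[OF assms]) auto
  then show "(f ^^ t) x \<in> free_part Q"
    using free_interior_subset_free_part by blast
qed

section \<open>The transfer maps\<close>

definition transit_set :: "'a set \<times> 'a set \<Rightarrow> 'a set \<times> 'a set \<Rightarrow> nat \<Rightarrow> nat \<Rightarrow> 'a set" where
  "transit_set P Q a k = {x. (\<forall>i\<in>{0..k - a}. (f ^^ i) x \<in> free_part P) \<and>
                            (\<forall>i\<in>{a..k}. (f ^^ i) x \<in> free_part Q)}"

lemma transit_set_subset_free_part: "transit_set P Q a k \<subseteq> free_part P"
  unfolding transit_set_def by (auto dest!: bspec[where x = 0])

lemma transit_set_interior:
  assumes P: "filtration_pair U f S P" and Q: "filtration_pair U f S Q"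
    and iso: "isolation_time P Q a" and k: "3 * a \<le> k" and x: "x \<in> transit_set P Q a k"
  shows "\<forall>i\<in>{1..k - a}. (f ^^ i) x \<in> interior (fst P)"
    and "\<forall>i\<in>{a..k}. (f ^^ i) x \<in> free_interior Q"
proof -
  have xP: "\<forall>i\<in>{0..k - a}. (f ^^ i) x \<in> free_part P"
    and xQ: "\<forall>i\<in>{a..k}. (f ^^ i) x \<in> free_part Q"
    using x unfolding transit_set_def by auto
  have step: "(f ^^ Suc i) x \<in> interior (fst R)"
    if "filtration_pair U f S R" and "(f ^^ i) x \<in> free_part R" for R i
    using filtration_pair_image_free_part[OF that] by simp
  show "\<forall>i\<in>{1..k - a}. (f ^^ i) x \<in> interior (fst P)"
  proof
    fix i assume "i \<in> {1..k - a}"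
    then obtain j where "i = Suc j" and "j \<in> {0..k - a}"
      by (cases i) auto
    then show "(f ^^ i) x \<in> interior (fst P)"
      using step[OF P] xP by blast
  qed
  show "\<forall>i\<in>{a..k}. (f ^^ i) x \<in> free_interior Q"
  proof
    fix i assume i: "i \<in> {a..k}"
    show "(f ^^ i) x \<in> free_interior Q"
    proof (cases "i = a")
      case True
      have "\<forall>j\<in>{a - a..a + a}. (f ^^ j) x \<in> free_closure P"
        using xP k free_part_subset_closure by fastforce
      then show ?thesis
        unfolding True by (intro isolation_time_centre[OF iso]) auto
    next
      case False
      then obtain j where "i = Suc j" and "j \<in> {a..k}"
        using i by (cases i) auto
      then have "(f ^^ i) x \<in> interior (fst Q)"
        using step[OF Q] xQ by blast
      then show ?thesis
        using xQ i unfolding free_interior_def free_part_def by blast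
    qed
  qed
qed

lemma openin_transit_set:
  assumes P: "filtration_pair U f S P" and Q: "filtration_pair U f S Q"
    and iso: "isolation_time P Q a" and k: "3 * a \<le> k"
  shows "openin (top_of_set (fst P)) (transit_set P Q a k)"
proof -
  define G where "G i = (if i \<le> k - a then (if i = 0 then UNIV else interior (fst P)) - snd P else UNIV)
    \<inter> (if a \<le> i then free_interior Q else UNIV)" for i
  have "transit_set P Q a k = fst P \<inter> {x. \<forall>i\<le>k. (f ^^ i) x \<in> U \<inter> G i}"
  proof (intro equalityI subsetI)
    fix x assume x: "x \<in> transit_set P Q a k"
    then have xP: "\<forall>i\<in>{0..k - a}. (f ^^ i) x \<in> fst P - snd P"
      and xQ: "\<forall>i\<in>{a..k}. (f ^^ i) x \<in> fst Q - snd Q"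
      unfolding transit_set_def free_part_def by auto
    note interior = transit_set_interior[OF P Q iso k x]
    have "(f ^^ i) x \<in> U" if "i \<le> k" for i
    proof (cases "i \<le> k - a")
      case True
      then show ?thesis
        using xP filtration_pair_subset(2)[OF P] by auto
    next
      case False
      then show ?thesis
        using xQ that k filtration_pair_subset(2)[OF Q] by auto
    qed
    moreover have "(f ^^ i) x \<in> G i" if "i \<le> k" for i
      using that xP interior unfolding G_def by auto
    ultimately have "(f ^^ i) x \<in> U \<inter> G i" if "i \<le> k" for i
      using that by blast
    moreover have "x \<in> fst P"
      using xP[rule_format, of 0] by simp
    ultimately show "x \<in> fst P \<inter> {x. \<forall>i\<le>k. (f ^^ i) x \<in> U \<inter> G i}"
      by blast
  next
    fix x assume "x \<in> fst P \<inter> {x. \<forall>i\<le>k. (f ^^ i) x \<in> U \<inter> G i}"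
    then have xP: "x \<in> fst P" and G: "\<And>i. i \<le> k \<Longrightarrow> (f ^^ i) x \<in> G i"
      by auto
    have "(f ^^ i) x \<in> free_part P" if "i \<in> {0..k - a}" for i
      using G[of i] that xP interior_subset[of "fst P"]
      unfolding G_def free_part_def by (cases "i = 0") auto
    moreover have "(f ^^ i) x \<in> free_part Q" if "i \<in> {a..k}" for i
    proof -
      have "(f ^^ i) x \<in> free_interior Q"
        using G[of i] that unfolding G_def by auto
      then show ?thesis
        using free_interior_subset_free_part by blast
    qed
    ultimately show "x \<in> transit_set P Q a k"
      unfolding transit_set_def by blast
  qed
  moreover have "open (G i)" for i
    unfolding G_def using open_free_interior[OF Q] filtration_pair_closed(2)[OF P]
    by (auto intro!: open_Int open_Diff)
  then have "open {x. \<forall>i\<le>k. (f ^^ i) x \<in> U \<inter> G i}"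
    by (rule open_orbit_constraint)
  ultimately show ?thesis
    by (simp add: openin_open_Int)
qed

lemma mem_transit_setI:
  assumes P: "filtration_pair U f S P" and Q: "filtration_pair U f S Q"
    and iso: "isolation_time Q P a" and k: "3 * a \<le> k"
    and xP: "\<forall>i\<in>{0..k - a}. (f ^^ i) x \<in> free_closure P"
    and xQ: "\<forall>i\<in>{a..k}. (f ^^ i) x \<in> free_closure Q"
    and exit: "(f ^^ k) x \<notin> snd Q"
  shows "x \<in> transit_set P Q a k"
proof -
  have not_exit: "(f ^^ i) x \<notin> snd R"
    if "filtration_pair U f S R" and "(f ^^ Suc i) x \<in> free_closure R" for R i
    using filtration_pair_image_exit[OF that(1)] that(2) by auto
  have "\<forall>i\<in>{k - a - a..k - a + a}. (f ^^ i) x \<in> free_closure Q"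
    using xQ k by fastforce
  then have "(f ^^ (k - a)) x \<in> free_interior P"
    using k by (intro isolation_time_centre[OF iso]) auto
  then have end_P: "(f ^^ (k - a)) x \<in> free_part P"
    using free_interior_subset_free_part by blast
  have "(f ^^ i) x \<in> free_part P" if "i \<in> {0..k - a}" for i
  proof (cases "i = k - a")
    case False
    then have "Suc i \<in> {0..k - a}"
      using that by auto
    then show ?thesis
      using xP that not_exit[OF P] free_closure_subset[OF P] unfolding free_part_def by blast
  qed (use end_P in simp)
  moreover have "(f ^^ i) x \<in> free_part Q" if "i \<in> {a..k}" for i
  proof (cases "i = k")
    case False
    then have "Suc i \<in> {a..k}"
      using that by auto
    then show ?thesis
      using xQ that not_exit[OF Q] free_closure_subset[OF Q] unfolding free_part_def by blast
  next
    case True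
    then have "(f ^^ i) x \<in> free_closure Q"
      using xQ that by blast
    then show ?thesis
      using True exit free_closure_subset[OF Q] unfolding free_part_def by blast
  qed
  ultimately show ?thesis
    unfolding transit_set_def by blast
qed

definition transfer_map :: "'a set \<times> 'a set \<Rightarrow> 'a set \<times> 'a set \<Rightarrow> nat \<Rightarrow> 'a set \<Rightarrow> 'a set" where
  "transfer_map Q P k y =
    (if y \<noteq> snd P \<and> the_elem y \<in> transit_set P Q (isolation_bound P Q) k
     then {(f ^^ k) (the_elem y)} else snd Q)"

lemma continuous_map_transfer_map:
  assumes P: "filtration_pair U f S P" and Q: "filtration_pair U f S Q"
    and k: "3 * isolation_bound P Q \<le> k"
  shows "continuous_map (NL_top (fst P) (snd P)) (NL_top (fst Q) (snd Q)) (transfer_map Q P k)"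
proof -
  define a where "a = isolation_bound P Q"
  define C where "C i = (if i \<le> k - a then free_closure P else UNIV) \<inter>
    (if a \<le> i then free_closure Q else UNIV)" for i
  define F where "F = {x. \<forall>i\<le>k. (f ^^ i) x \<in> C i}"
  have k': "3 * a \<le> k"
    using k unfolding a_def .
  have C: "closed (C i) \<and> C i \<subseteq> U" if "i \<le> k" for i
    using that k' filtration_pair_free_closure(1,2)[OF P] filtration_pair_free_closure(1,2)[OF Q]
    unfolding C_def by (auto intro: compact_imp_closed)
  show ?thesis
    unfolding transfer_map_def a_def[symmetric]
  proof (rule continuous_map_NL_top_glue)
    show "openin (top_of_set (fst P)) (transit_set P Q a k)"
      using isolation_bound(1)[OF P Q] k' unfolding a_def by (rule openin_transit_set[OF P Q])
    show "transit_set P Q a k \<subseteq> F"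
      using free_part_subset_closure unfolding transit_set_def F_def C_def by fastforce
    show "transit_set P Q a k \<inter> snd P = {}"
      using transit_set_subset_free_part unfolding free_part_def by blast
    have "closed F"
      unfolding F_def using C by (rule closed_orbit_constraint)
    moreover have "F \<subseteq> fst P"
      using free_closure_subset[OF P] unfolding F_def C_def by fastforce
    ultimately show "closedin (top_of_set (fst P)) F"
      by (simp add: closed_subset)
    show "continuous_on F (f ^^ k)"
    proof (rule continuous_on_funpow)
      fix x i assume "x \<in> F" and "i < k"
      then have "(f ^^ i) x \<in> C i"
        unfolding F_def by simp
      then show "(f ^^ i) x \<in> U"
        using C[of i] \<open>i < k\<close> by auto
    qed
    show "(f ^^ k) ` transit_set P Q a k \<subseteq> fst Q - snd Q"
      using k' unfolding transit_set_def free_part_def by auto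
    show "(f ^^ k) ` (F - transit_set P Q a k) \<subseteq> snd Q"
    proof clarify
      fix x assume "x \<in> F" and "x \<notin> transit_set P Q a k"
      then have Fx: "(f ^^ i) x \<in> C i" if "i \<le> k" for i
        using that unfolding F_def by blast
      have "(f ^^ i) x \<in> free_closure P" if "i \<in> {0..k - a}" for i
        using Fx[of i] that unfolding C_def by simp
      moreover have "(f ^^ i) x \<in> free_closure Q" if "i \<in> {a..k}" for i
        using Fx[of i] that unfolding C_def by simp
      ultimately show "(f ^^ k) x \<in> snd Q"
        using \<open>x \<notin> transit_set P Q a k\<close> mem_transit_setI[OF P Q isolation_bound(2)[OF P Q, folded a_def] k'] by blast
    qed
    show "snd Q \<subseteq> fst Q"
      by (rule filtration_pair_subset(1)[OF Q])
  qed
qed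

lemma transfer_map_base: "transfer_map Q P k (snd P) = snd Q"
  unfolding transfer_map_def by simp

lemma transfer_map_singleton:
  "x \<in> free_part P \<Longrightarrow>
   transfer_map Q P k {x} = (if x \<in> transit_set P Q (isolation_bound P Q) k then {(f ^^ k) x} else snd Q)"
  unfolding transfer_map_def free_part_def by auto

lemma transit_set_endpoint: "x \<in> transit_set P Q a k \<Longrightarrow> a \<le> k \<Longrightarrow> (f ^^ k) x \<in> free_part Q"
  unfolding transit_set_def by auto

lemma fP_funpow_base: "(fP f L ^^ k) L = L"
  by (induction k) (auto simp: fP_def)

lemma fP_funpow_singleton:
  assumes P: "filtration_pair U f S P" and x: "x \<in> free_part P"
  shows "(fP f (snd P) ^^ k) {x} = (if \<forall>i\<le>k. (f ^^ i) x \<in> free_part P then {(f ^^ k) x} else snd P)"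
proof (induction k)
  case (Suc k)
  show ?case
  proof (cases "\<forall>i\<le>k. (f ^^ i) x \<in> free_part P")
    case True
    then have fk: "(f ^^ k) x \<in> free_part P"
      by blast
    then have "(fP f (snd P) ^^ Suc k) {x} = qmap (snd P) ((f ^^ Suc k) x)"
      using Suc True unfolding fP_def free_part_def by auto
    moreover have "(f ^^ Suc k) x \<in> fst P"
      using filtration_pair_image_free_part[OF P fk] interior_subset by auto
    ultimately show ?thesis
      using True by (auto simp: qmap_def free_part_def le_Suc_eq)
  next
    case False
    then show ?thesis
      using Suc by (auto simp: fP_def le_Suc_eq)
  qed
qed (use x in simp)

lemma transit_set_self:
  assumes "2 * a \<le> k"
  shows "transit_set P P a k = {x. \<forall>i\<le>k. (f ^^ i) x \<in> free_part P}"
proof -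
  have "(\<forall>i\<in>{0..k - a}. p i) \<and> (\<forall>i\<in>{a..k}. p i) \<longleftrightarrow> (\<forall>i\<in>{0..k}. p i)" for p
    using ball_atLeastAtMost_union[of 0 "k - a" p a k] assms by auto
  then show ?thesis
    unfolding transit_set_def atLeast0AtMost by auto
qed

lemma transfer_map_self:
  assumes P: "filtration_pair U f S P" and k: "2 * isolation_bound P P \<le> k"
    and y: "y \<in> NL_space (fst P) (snd P)"
  shows "transfer_map P P k y = (fP f (snd P) ^^ k) y"
  using y
proof (cases rule: NL_space_cases)
  case 1
  then show ?thesis
    by (simp add: transfer_map_base fP_funpow_base)
next
  case (2 x)
  then show ?thesis
    using transfer_map_singleton[of x P P k] fP_funpow_singleton[OF P, of x k]
      transit_set_self[OF k] by (simp add: free_part_def)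
qed

lemma transit_set_comp:
  assumes P: "filtration_pair U f S P" and P': "filtration_pair U f S P'"
    and P'': "filtration_pair U f S P''"
    and k1: "3 * isolation_bound P' P'' \<le> k1" and k2: "3 * isolation_bound P P' \<le> k2"
  shows "x \<in> transit_set P P'' (isolation_bound P P'') (k1 + k2) \<longleftrightarrow>
    x \<in> transit_set P P' (isolation_bound P P') k2 \<and>
    (f ^^ k2) x \<in> transit_set P' P'' (isolation_bound P' P'') k1"
proof -
  have transfer: "segment_transfer (isolation_bound Q R)
      (\<lambda>i. (f ^^ i) x \<in> free_part Q) (\<lambda>i. (f ^^ i) x \<in> free_part R)"
    "segment_transfer (isolation_bound Q R)
      (\<lambda>i. (f ^^ i) x \<in> free_part R) (\<lambda>i. (f ^^ i) x \<in> free_part Q)"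
    if "filtration_pair U f S Q" and "filtration_pair U f S R" for Q R
    using isolation_bound[OF that] by (simp_all add: segment_transfer_orbit)
  show ?thesis
    unfolding transit_set_def mem_Collect_eq funpow_apply_add conj_assoc
    by (rule segment_relay[OF isolation_bound_triangle[OF P P' P''] k1 k2
          transfer[OF P P'] transfer[OF P' P''] transfer[OF P P'']])
qed

lemma transfer_map_comp:
  assumes P: "filtration_pair U f S P" and P': "filtration_pair U f S P'"
    and P'': "filtration_pair U f S P''"
    and k1: "3 * isolation_bound P' P'' \<le> k1" and k2: "3 * isolation_bound P P' \<le> k2"
    and y: "y \<in> NL_space (fst P) (snd P)"
  shows "transfer_map P'' P (k1 + k2) y = transfer_map P'' P' k1 (transfer_map P' P k2 y)"
  using y
proof (cases rule: NL_space_cases)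
  case 1
  then show ?thesis
    by (simp add: transfer_map_base)
next
  case (2 x)
  have x: "x \<in> free_part P"
    using 2(1) unfolding free_part_def .
  note comp = transit_set_comp[OF P P' P'' k1 k2, of x]
  show ?thesis
  proof (cases "x \<in> transit_set P P' (isolation_bound P P') k2")
    case True
    have "(f ^^ k2) x \<in> free_part P'"
      using transit_set_endpoint[OF True] k2 by simp
    then show ?thesis
      using True comp 2 x by (simp add: transfer_map_singleton funpow_apply_add)
  next
    case False
    then show ?thesis
      using comp 2 x by (simp add: transfer_map_singleton transfer_map_base)
  qed
qed

end

theorem mainTheorem6:
  fixes U :: "'a::metric_space set" and f :: "'a \<Rightarrow> 'a" and S :: "'a set"
  assumes "locally compact (UNIV :: 'a set)"
    and "open U"
    and "continuous_on U f"
    and "isolated_invariant_set U f S"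
  shows "\<exists>(M :: 'a set \<times> 'a set \<Rightarrow> 'a set \<times> 'a set \<Rightarrow> nat)
          (r :: 'a set \<times> 'a set \<Rightarrow> 'a set \<times> 'a set \<Rightarrow> nat \<Rightarrow> 'a set \<Rightarrow> 'a set).
     (\<forall>N L N' L'. filtration_pair U f S (N, L) \<and> filtration_pair U f S (N', L') \<longrightarrow>
        (\<forall>k \<ge> M (N, L) (N', L').
           continuous_map (NL_top N L) (NL_top N' L') (r (N', L') (N, L) k) \<and>
           r (N', L') (N, L) k L = L') \<and>
        M (N, L) (N', L') = M (N', L') (N, L)) \<and>
     (\<forall>N L. filtration_pair U f S (N, L) \<longrightarrow>
        (\<forall>k \<ge> M (N, L) (N, L). \<forall>y \<in> NL_space N L.
           r (N, L) (N, L) k y = (fP f L ^^ k) y)) \<and>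
     (\<forall>P P' P''. filtration_pair U f S P \<and> filtration_pair U f S P' \<and>
         filtration_pair U f S P'' \<longrightarrow>
        M P P'' \<le> M P P' + M P' P'' \<and>
        (\<forall>k1 k2. k1 \<ge> M P' P'' \<and> k2 \<ge> M P P' \<longrightarrow>
           (\<forall>y \<in> NL_space (fst P) (snd P).
              r P'' P (k1 + k2) y = r P'' P' k1 (r P' P k2 y))))"
proof -
  interpret dynamical_system U f
    using assms(2,3) by unfold_locales
  show ?thesis
  proof (intro exI[of _ "\<lambda>P Q. 3 * isolation_bound P Q"] exI[of _ transfer_map] conjI allI impI ballI)
    fix N L N' L' k
    assume "filtration_pair U f S (N, L) \<and> filtration_pair U f S (N', L')"
      and "3 * isolation_bound (N, L) (N', L') \<le> k"
    then show "continuous_map (NL_top N L) (NL_top N' L') (transfer_map (N', L') (N, L) k)"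
      using continuous_map_transfer_map[of S "(N, L)" "(N', L')" k] by simp
    show "transfer_map (N', L') (N, L) k L = L'"
      using transfer_map_base[of "(N', L')" "(N, L)" k] by simp
  next
    fix N L N' L'
    show "3 * isolation_bound (N, L) (N', L') = 3 * isolation_bound (N', L') (N, L)"
      by (simp add: isolation_bound_sym)
  next
    fix N L k y
    assume "filtration_pair U f S (N, L)" and "3 * isolation_bound (N, L) (N, L) \<le> k"
      and "y \<in> NL_space N L"
    then show "transfer_map (N, L) (N, L) k y = (fP f L ^^ k) y"
      using transfer_map_self[of S "(N, L)" k y] by simp
  next
    fix P P' P''
    assume "filtration_pair U f S P \<and> filtration_pair U f S P' \<and> filtration_pair U f S P''"
    then show "3 * isolation_bound P P'' \<le> 3 * isolation_bound P P' + 3 * isolation_bound P' P''"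
      using isolation_bound_triangle[of S P P' P''] by simp
  next
    fix P P' P'' k1 k2 y
    assume "filtration_pair U f S P \<and> filtration_pair U f S P' \<and> filtration_pair U f S P''"
      and "3 * isolation_bound P' P'' \<le> k1 \<and> 3 * isolation_bound P P' \<le> k2"
      and "y \<in> NL_space (fst P) (snd P)"
    then show "transfer_map P'' P (k1 + k2) y = transfer_map P'' P' k1 (transfer_map P' P k2 y)"
      using transfer_map_comp[of S P P' P'' k1 k2 y] by simp
  qed
qed

end
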